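(* Let $G$ be a graph obtained as a $3$-clique-sum of graphs $G_1$ and $G_2$ along the clique $T=\{x_1,x_2,x_3\}$, and let $G_i'=G\cap G_i$ for $i=1,2$ (i.e. $G_i$ with those edges of $T$ that were deleted in forming $G$ removed). Let $k$ be an integer. Suppose that $G_1'$ has an AT-orientation $D_1'$ with maximum out-degree at most $k$, and that $G_2$ has an AT-orientation $D_2$ with maximum out-degree at most $k$ such that $d^+_{D_2}(x_1)=0$, $d^+_{D_2}(x_2)\leq 1$, $d^+_{D_2}(x_3)\leq 2$, and every out-neighbour in $D_2$ of each vertex of $T$ lies in $T$. Then $G$ has an AT-orientation $D$ with maximum out-degree at most $k$ such that $d^+_D(v)=d^+_{D_1'}(v)$ for every $v\in V(G_1)$.
   Context: Graphs are finite and simple. The clique-sum of graphs $G$ and $H$ each containing a clique of the same size is obtained from their disjoint union by identifying a clique of $G$ with a clique of $H$ of the same size and possibly deleting some edges of the identified clique; a $3$-clique-sum is one where the cliques have at most $3$ vertices. For an orientation $D$, $d^+_D(v)$ is the out-degree of $v$. An Eulerian subgraph of $D$ is a spanning subdigraph $H$ (not necessarily connected, possibly edgeless) with $d^-_H(v)=d^+_H(v)$ for all $v$; $EE(D)$ (resp. $OE(D)$) is the set of Eulerian subgraphs with an even (resp. odd) number of edges; $D$ is an AT-orientation if $|EE(D)|-|OE(D)|\neq 0$. *)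

theory Defs
  imports Main
begin

definition simple_graph :: "'a set \<Rightarrow> 'a set set \<Rightarrow> bool" where
  "simple_graph V E \<longleftrightarrow> finite V \<and>
     (\<forall>e\<in>E. \<exists>u v. u \<noteq> v \<and> u \<in> V \<and> v \<in> V \<and> e = {u, v})"

definition orientation :: "'a set \<Rightarrow> 'a set set \<Rightarrow> ('a \<times> 'a) set \<Rightarrow> bool" where
  "orientation V E D \<longleftrightarrow> D \<subseteq> V \<times> V \<and>
     (\<forall>(u, v)\<in>D. {u, v} \<in> E) \<and>
     (\<forall>e\<in>E. \<exists>!a. a \<in> D \<and> e = {fst a, snd a})"

definition outdeg :: "('a \<times> 'a) set \<Rightarrow> 'a \<Rightarrow> nat" where
  "outdeg D v = card {w. (v, w) \<in> D}"

definition indeg :: "('a \<times> 'a) set \<Rightarrow> 'a \<Rightarrow> nat" where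
  "indeg D v = card {w. (w, v) \<in> D}"

definition eulerian_subgraphs :: "('a \<times> 'a) set \<Rightarrow> ('a \<times> 'a) set set" where
  "eulerian_subgraphs D = {H. H \<subseteq> D \<and> (\<forall>v. indeg H v = outdeg H v)}"

definition EE :: "('a \<times> 'a) set \<Rightarrow> ('a \<times> 'a) set set" where
  "EE D = {H \<in> eulerian_subgraphs D. even (card H)}"

definition OE :: "('a \<times> 'a) set \<Rightarrow> ('a \<times> 'a) set set" where
  "OE D = {H \<in> eulerian_subgraphs D. odd (card H)}"

definition AT_orientation :: "('a \<times> 'a) set \<Rightarrow> bool" where
  "AT_orientation D \<longleftrightarrow> int (card (EE D)) - int (card (OE D)) \<noteq> 0"

definition max_outdeg_le :: "'a set \<Rightarrow> ('a \<times> 'a) set \<Rightarrow> int \<Rightarrow> bool" where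
  "max_outdeg_le V D k \<longleftrightarrow> (\<forall>v\<in>V. int (outdeg D v) \<le> k)"

end

theory Submission
  imports Defs
begin

text \<open>Let D consist of D1' and the arcs of D2 whose edge does not belong to G1.
  The arcs of D2 leaving T stay in T and decrease the rank x3 > x2 > x1 (x1 is a sink, and
  x2 can only point to x1); a balanced digraph uses no arc whose tail lies in a set closed under
  such rank-decreasing arcs. So D2 and its restriction have the same Eulerian subgraphs.
  In D no arc leaves V1 and no arc of the restriction starts in V1, so by balance an Eulerian
  subgraph of D cannot use an arc entering V1 from outside either. Hence it splits uniquely into
  Eulerian subgraphs of the two parts, and the signed count |EE| - |OE| is multiplicative.\<close>

section \<open>Balanced digraphs\<close>

definition balanced :: "('a \<times> 'a) set \<Rightarrow> bool" where
  "balanced H \<longleftrightarrow> (\<forall>v. indeg H v = outdeg H v)"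

lemma eulerian_subgraphs_balanced: "eulerian_subgraphs D = {H. H \<subseteq> D \<and> balanced H}"
  unfolding eulerian_subgraphs_def balanced_def ..

lemma finite_out_neighbours: "finite D \<Longrightarrow> finite {w. (v, w) \<in> D}"
  by (rule finite_subset[of _ "snd ` D"]) force+

lemma indeg_converse: "indeg H v = outdeg (converse H) v"
  unfolding indeg_def outdeg_def by simp

lemma outdeg_eq_0_iff: "finite D \<Longrightarrow> outdeg D v = 0 \<longleftrightarrow> (\<forall>w. (v, w) \<notin> D)"
  unfolding outdeg_def by (simp add: finite_out_neighbours)

lemma indeg_eq_0_iff: "finite D \<Longrightarrow> indeg D v = 0 \<longleftrightarrow> (\<forall>u. (u, v) \<notin> D)"
  by (simp add: indeg_converse outdeg_eq_0_iff)

lemma outdeg_mono: "finite D' \<Longrightarrow> D \<subseteq> D' \<Longrightarrow> outdeg D v \<le> outdeg D' v"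
  unfolding outdeg_def by (intro card_mono finite_out_neighbours) auto

lemma outdeg_Un_no_tail: "v \<notin> fst ` D' \<Longrightarrow> outdeg (D \<union> D') v = outdeg D v"
  unfolding outdeg_def by (metis (no_types, lifting) Un_iff fst_conv image_eqI)

lemma card_arcs_from:
  assumes "finite H" "finite B"
  shows "card {a \<in> H. fst a \<in> B} = (\<Sum>v\<in>B. outdeg H v)"
proof -
  have "{a \<in> H. fst a \<in> B} = (SIGMA v:B. {w. (v, w) \<in> H})" by auto
  then show ?thesis unfolding outdeg_def using assms by (simp add: finite_out_neighbours)
qed

lemma card_arcs_into:
  assumes "finite H" "finite B"
  shows "card {a \<in> H. snd a \<in> B} = (\<Sum>v\<in>B. indeg H v)"
proof -
  have "{a \<in> H. snd a \<in> B} = prod.swap ` {a \<in> converse H. fst a \<in> B}" by force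
  then have "card {a \<in> H. snd a \<in> B} = card {a \<in> converse H. fst a \<in> B}"
    by (simp add: card_image inj_on_def)
  then show ?thesis using assms by (simp add: card_arcs_from indeg_converse)
qed

text \<open>Counting: the arcs with tail in A are among those with head in A, and balance makes
  the two numbers equal.\<close>
lemma balanced_in_closed_if_out_closed:
  assumes "finite H" "balanced H" "H `` A \<subseteq> A"
  shows "converse H `` A \<subseteq> A"
proof
  fix u assume "u \<in> converse H `` A"
  then obtain w where uw: "(u, w) \<in> H" "w \<in> A" by blast
  define B where "B = A \<inter> (fst ` H \<union> snd ` H)"
  have "finite B" using assms(1) unfolding B_def by auto
  have "{a \<in> H. fst a \<in> B} \<subseteq> {a \<in> H. snd a \<in> B}"
    using assms(3) unfolding B_def by force
  moreover have "card {a \<in> H. fst a \<in> B} = card {a \<in> H. snd a \<in> B}"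
    using assms(2) \<open>finite B\<close> assms(1)
    by (simp add: card_arcs_from card_arcs_into balanced_def)
  ultimately have "{a \<in> H. fst a \<in> B} = {a \<in> H. snd a \<in> B}"
    using assms(1) by (intro card_subset_eq) auto
  moreover have "(u, w) \<in> {a \<in> H. snd a \<in> B}" using uw unfolding B_def by force
  ultimately have "(u, w) \<in> {a \<in> H. fst a \<in> B}" by simp
  then show "u \<in> A" unfolding B_def by simp
qed

lemma balanced_no_tail_in_ranked_set:
  fixes r :: "'a \<Rightarrow> nat"
  assumes "finite H" "balanced H" "H \<subseteq> D"
    and ranked: "\<forall>(v, w)\<in>D. v \<in> S \<longrightarrow> w \<in> S \<and> r w < r v"
  shows "v \<in> S \<Longrightarrow> (v, w) \<notin> H"
proof (induction "r v" arbitrary: v w rule: less_induct)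
  case less
  show ?case
  proof
    assume vw: "(v, w) \<in> H"
    then have "w \<in> S" "r w < r v" using ranked \<open>H \<subseteq> D\<close> less.prems by auto
    then have "outdeg H w = 0" using less.hyps \<open>finite H\<close> by (simp add: outdeg_eq_0_iff)
    then have "indeg H w = 0" using \<open>balanced H\<close> by (simp add: balanced_def)
    then show False using vw \<open>finite H\<close> by (simp add: indeg_eq_0_iff)
  qed
qed

lemma balanced_Un_iff:
  assumes "H1 \<subseteq> V \<times> V" "H2 \<subseteq> (- V) \<times> (- V)"
  shows "balanced (H1 \<union> H2) \<longleftrightarrow> balanced H1 \<and> balanced H2"
proof -
  have "{w. (v, w) \<in> H1 \<union> H2} = (if v \<in> V then {w. (v, w) \<in> H1} else {w. (v, w) \<in> H2})"
    "{u. (u, v) \<in> H1 \<union> H2} = (if v \<in> V then {u. (u, v) \<in> H1} else {u. (u, v) \<in> H2})" for v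
    using assms by auto
  then have "outdeg (H1 \<union> H2) v = (if v \<in> V then outdeg H1 v else outdeg H2 v)"
    "indeg (H1 \<union> H2) v = (if v \<in> V then indeg H1 v else indeg H2 v)" for v
    unfolding outdeg_def indeg_def by simp_all
  moreover have "{w. (v, w) \<in> H2} = {}" "{u. (u, v) \<in> H2} = {}" if "v \<in> V" for v
    using assms that by auto
  moreover have "{w. (v, w) \<in> H1} = {}" "{u. (u, v) \<in> H1} = {}" if "v \<notin> V" for v
    using assms that by auto
  ultimately show ?thesis unfolding balanced_def outdeg_def indeg_def
    by (metis card.empty add_0)
qed

text \<open>Arcs of D2 cannot be used to enter V: nothing could leave V again.\<close>
lemma balanced_arcs_outside:
  assumes "finite H" "balanced H" "H \<subseteq> D1 \<union> D2"
    and "D1 \<subseteq> V \<times> V" "fst ` D2 \<inter> V = {}"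
  shows "H \<inter> D2 \<subseteq> (- V) \<times> (- V)"
proof
  fix a assume "a \<in> H \<inter> D2"
  then obtain u w where uw: "a = (u, w)" "(u, w) \<in> H" "(u, w) \<in> D2" by (cases a) auto
  let ?A = "- fst ` D2"
  have "H `` ?A \<subseteq> ?A"
  proof
    fix y assume "y \<in> H `` ?A"
    then obtain x where "(x, y) \<in> H" "x \<notin> fst ` D2" by blast
    then have "(x, y) \<in> D1" using assms(3) by force
    then show "y \<in> ?A" using assms(4,5) by blast
  qed
  then have "converse H `` ?A \<subseteq> ?A"
    by (rule balanced_in_closed_if_out_closed[OF assms(1,2)])
  then have "w \<notin> ?A" using uw by force
  then show "a \<in> (- V) \<times> (- V)" using uw assms(5) by force
qed

lemma eulerian_subgraphs_Un:
  assumes "finite D1" "finite D2" "D1 \<subseteq> V \<times> V" "fst ` D2 \<inter> V = {}"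
  shows "eulerian_subgraphs (D1 \<union> D2)
    = (\<lambda>(H1, H2). H1 \<union> H2) ` (eulerian_subgraphs D1 \<times> eulerian_subgraphs D2)"
proof (intro equalityI subsetI)
  fix H assume "H \<in> eulerian_subgraphs (D1 \<union> D2)"
  then have H: "H \<subseteq> D1 \<union> D2" "balanced H" "finite H"
    using assms(1,2) finite_subset by (auto simp: eulerian_subgraphs_balanced)
  have "H \<inter> D2 \<subseteq> (- V) \<times> (- V)" using balanced_arcs_outside H(3,2,1) assms(3,4) .
  moreover have "H \<inter> D1 \<subseteq> V \<times> V" using assms(3) by blast
  moreover have "H = (H \<inter> D1) \<union> (H \<inter> D2)" using H(1) by blast
  ultimately have "balanced (H \<inter> D1) \<and> balanced (H \<inter> D2)"
    using H(2) balanced_Un_iff[of "H \<inter> D1" V "H \<inter> D2"] by simp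
  then have "(H \<inter> D1, H \<inter> D2) \<in> eulerian_subgraphs D1 \<times> eulerian_subgraphs D2"
    by (simp add: eulerian_subgraphs_balanced)
  with \<open>H = (H \<inter> D1) \<union> (H \<inter> D2)\<close>
  show "H \<in> (\<lambda>(H1, H2). H1 \<union> H2) ` (eulerian_subgraphs D1 \<times> eulerian_subgraphs D2)"
    by (intro image_eqI[where x = "(H \<inter> D1, H \<inter> D2)"]) simp_all
next
  fix H assume "H \<in> (\<lambda>(H1, H2). H1 \<union> H2) ` (eulerian_subgraphs D1 \<times> eulerian_subgraphs D2)"
  then obtain H1 H2 where H: "H = H1 \<union> H2" "H1 \<subseteq> D1" "H2 \<subseteq> D2" "balanced H1" "balanced H2"
    by (auto simp: eulerian_subgraphs_balanced)
  have "finite H2" using H(3) assms(2) finite_subset by blast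
  then have "H2 \<inter> D2 \<subseteq> (- V) \<times> (- V)"
    using H(3,5) assms(4) by (intro balanced_arcs_outside[of H2 "{}" D2 V]) auto
  then have "balanced H" using H assms(3) balanced_Un_iff[of H1 V H2] by blast
  then show "H \<in> eulerian_subgraphs (D1 \<union> D2)"
    using H(1-3) by (auto simp: eulerian_subgraphs_balanced)
qed

section \<open>The signed count of Eulerian subgraphs\<close>

definition eulerian_sign_sum :: "('a \<times> 'a) set \<Rightarrow> int" where
  "eulerian_sign_sum D = (\<Sum>H\<in>eulerian_subgraphs D. (-1) ^ card H)"

lemma finite_eulerian_subgraphs: "finite D \<Longrightarrow> finite (eulerian_subgraphs D)"
  unfolding eulerian_subgraphs_def by (rule finite_subset[of _ "Pow D"]) auto

lemma AT_orientation_iff_sign_sum: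
  assumes "finite D"
  shows "AT_orientation D \<longleftrightarrow> eulerian_sign_sum D \<noteq> 0"
proof -
  have split: "eulerian_subgraphs D = EE D \<union> OE D" "EE D \<inter> OE D = {}"
    unfolding EE_def OE_def by auto
  then have fin: "finite (EE D)" "finite (OE D)"
    using finite_eulerian_subgraphs[OF assms] by auto
  have "eulerian_sign_sum D = (\<Sum>H\<in>EE D. (-1) ^ card H) + (\<Sum>H\<in>OE D. (-1) ^ card H)"
    unfolding eulerian_sign_sum_def split(1) using fin split(2) by (rule sum.union_disjoint)
  also have "\<dots> = (\<Sum>H\<in>EE D. 1) + (\<Sum>H\<in>OE D. -1)"
    by (intro arg_cong2[where f = "(+)"] sum.cong) (auto simp: EE_def OE_def)
  finally show ?thesis unfolding AT_orientation_def by simp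
qed

lemma eulerian_sign_sum_Un:
  assumes "finite D1" "finite D2" "D1 \<subseteq> V \<times> V" "fst ` D2 \<inter> V = {}"
  shows "eulerian_sign_sum (D1 \<union> D2) = eulerian_sign_sum D1 * eulerian_sign_sum D2"
proof -
  let ?P = "eulerian_subgraphs D1 \<times> eulerian_subgraphs D2"
  have "D1 \<inter> D2 = {}" using assms(3,4) by force
  then have disjoint: "H1 \<inter> H2 = {}" "finite H1" "finite H2" if "(H1, H2) \<in> ?P" for H1 H2
    using that assms(1,2) finite_subset unfolding eulerian_subgraphs_def by blast+
  have "inj_on (\<lambda>(H1, H2). H1 \<union> H2) ?P"
    using \<open>D1 \<inter> D2 = {}\<close> unfolding inj_on_def eulerian_subgraphs_def by (clarsimp; blast)
  then have "eulerian_sign_sum (D1 \<union> D2) = (\<Sum>(H1, H2)\<in>?P. (-1) ^ card (H1 \<union> H2))"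
    unfolding eulerian_sign_sum_def eulerian_subgraphs_Un[OF assms]
    by (simp add: sum.reindex case_prod_unfold)
  also have "\<dots> = (\<Sum>(H1, H2)\<in>?P. (-1) ^ card H1 * (-1) ^ card H2)"
    by (intro sum.cong) (auto simp: card_Un_disjoint disjoint power_add)
  also have "\<dots> = eulerian_sign_sum D1 * eulerian_sign_sum D2"
    unfolding eulerian_sign_sum_def sum_product sum.cartesian_product by (simp add: case_prod_unfold)
  finally show ?thesis .
qed

lemma simple_graph_edge:
  "simple_graph V E \<Longrightarrow> {u, w} \<in> E \<Longrightarrow> u \<noteq> w \<and> u \<in> V \<and> w \<in> V"
  unfolding simple_graph_def by (metis doubleton_eq_iff)

lemma orientation_arc_edge: "orientation V E D \<Longrightarrow> (u, w) \<in> D \<Longrightarrow> {u, w} \<in> E"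
  unfolding orientation_def by blast

lemma orientation_arcs_subset: "orientation V E D \<Longrightarrow> D \<subseteq> V \<times> V"
  unfolding orientation_def by blast

lemma orientation_arc_of_edge:
  assumes "orientation V E D" "e \<in> E"
  shows "\<exists>!a. a \<in> D \<and> e = {fst a, snd a}"
proof -
  have "\<forall>e\<in>E. \<exists>!a. a \<in> D \<and> e = {fst a, snd a}"
    using assms(1) unfolding orientation_def by (rule conjunct2[THEN conjunct2])
  then show ?thesis using assms(2) by (rule bspec)
qed

lemma orientation_edge_arc:
  assumes "orientation V E D" "{u, w} \<in> E"
  shows "(u, w) \<in> D \<or> (w, u) \<in> D"
proof -
  obtain a where a: "a \<in> D" "{u, w} = {fst a, snd a}"
    using ex1_implies_ex[OF orientation_arc_of_edge[OF assms]] by blast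
  then have "a = (u, w) \<or> a = (w, u)" by (metis doubleton_eq_iff prod.collapse)
  with a(1) show ?thesis by blast
qed

lemma finite_orientation: "orientation V E D \<Longrightarrow> finite V \<Longrightarrow> finite D"
  by (metis finite_SigmaI finite_subset orientation_arcs_subset)

lemma orientation_Un:
  assumes "orientation V E D" "orientation V' E' D'" "E \<inter> E' = {}"
  shows "orientation (V \<union> V') (E \<union> E') (D \<union> D')"
  unfolding orientation_def
proof (intro conjI)
  show "D \<union> D' \<subseteq> (V \<union> V') \<times> (V \<union> V')" "\<forall>(u, w)\<in>D \<union> D'. {u, w} \<in> E \<union> E'"
    using assms(1,2) unfolding orientation_def by blast+
  have edge: "{fst a, snd a} \<in> E" if "a \<in> D" for a
    using orientation_arc_edge[OF assms(1)] that by (cases a) auto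
  have edge': "{fst a, snd a} \<in> E'" if "a \<in> D'" for a
    using orientation_arc_edge[OF assms(2)] that by (cases a) auto
  show "\<forall>e\<in>E \<union> E'. \<exists>!a. a \<in> D \<union> D' \<and> e = {fst a, snd a}"
  proof
    fix e assume "e \<in> E \<union> E'"
    then consider "e \<in> E" "e \<notin> E'" | "e \<in> E'" "e \<notin> E" using assms(3) by blast
    then show "\<exists>!a. a \<in> D \<union> D' \<and> e = {fst a, snd a}"
    proof cases
      case 1
      then have "a \<in> D \<union> D' \<and> e = {fst a, snd a} \<longleftrightarrow> a \<in> D \<and> e = {fst a, snd a}" for a
        using edge' by blast
      then show ?thesis using orientation_arc_of_edge[OF assms(1) \<open>e \<in> E\<close>] by (simp only:)
    next
      case 2
      then have "a \<in> D \<union> D' \<and> e = {fst a, snd a} \<longleftrightarrow> a \<in> D' \<and> e = {fst a, snd a}" for a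
        using edge by blast
      then show ?thesis using orientation_arc_of_edge[OF assms(2) \<open>e \<in> E'\<close>] by (simp only:)
    qed
  qed
qed

lemma orientation_restrict:
  assumes "orientation V E D" "E' \<subseteq> E"
  shows "orientation V E' {(u, w) \<in> D. {u, w} \<in> E'}"
  unfolding orientation_def
proof (intro conjI)
  show "{(u, w) \<in> D. {u, w} \<in> E'} \<subseteq> V \<times> V"
    using orientation_arcs_subset[OF assms(1)] by blast
  show "\<forall>(u, w)\<in>{(u, w) \<in> D. {u, w} \<in> E'}. {u, w} \<in> E'" by blast
  show "\<forall>e\<in>E'. \<exists>!a. a \<in> {(u, w) \<in> D. {u, w} \<in> E'} \<and> e = {fst a, snd a}"
  proof
    fix e assume "e \<in> E'"
    then have "\<exists>!a. a \<in> D \<and> e = {fst a, snd a}"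
      using assms(2) by (intro orientation_arc_of_edge[OF assms(1)]) blast
    moreover have "a \<in> {(u, w) \<in> D. {u, w} \<in> E'} \<and> e = {fst a, snd a}
        \<longleftrightarrow> a \<in> D \<and> e = {fst a, snd a}" for a
      using \<open>e \<in> E'\<close> by (cases a) auto
    ultimately show "\<exists>!a. a \<in> {(u, w) \<in> D. {u, w} \<in> E'} \<and> e = {fst a, snd a}"
      by (simp only:)
  qed
qed

section \<open>Gluing along a triangle\<close>

lemma eulerian_subgraph_no_tail_in_triangle:
  assumes G: "simple_graph V E" and D: "orientation V E D"
    and distinct: "x1 \<noteq> x2" "x1 \<noteq> x3" "x2 \<noteq> x3"
    and edge: "{x1, x2} \<in> E"
    and sink: "outdeg D x1 = 0" and x2_out: "outdeg D x2 \<le> 1"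
    and closed: "\<forall>x\<in>{x1, x2, x3}. \<forall>w. (x, w) \<in> D \<longrightarrow> w \<in> {x1, x2, x3}"
    and H: "H \<in> eulerian_subgraphs D" "(u, w) \<in> H"
  shows "u \<notin> {x1, x2, x3}"
proof -
  have "finite D" using G finite_orientation[OF D] by (simp add: simple_graph_def)
  have no_out_x1: "(x1, w) \<notin> D" for w
    using sink \<open>finite D\<close> by (simp add: outdeg_eq_0_iff)
  have "(x2, x1) \<in> D" using orientation_edge_arc[OF D edge] no_out_x1 by blast
  then have out_x2: "w = x1" if "(x2, w) \<in> D" for w
    using x2_out that card_le_Suc0_iff_eq[OF finite_out_neighbours[OF \<open>finite D\<close>]]
    unfolding outdeg_def by auto
  define r :: "'a \<Rightarrow> nat" where "r v = (if v = x1 then 0 else if v = x2 then 1 else 2)" for v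
  have "w \<in> {x1, x2, x3} \<and> r w < r v" if "(v, w) \<in> D" "v \<in> {x1, x2, x3}" for v w
  proof -
    have "w \<in> {x1, x2, x3}" using closed that by blast
    moreover have "v \<noteq> w" using simple_graph_edge[OF G orientation_arc_edge[OF D that(1)]] by blast
    moreover have "v \<noteq> x1" using no_out_x1 that(1) by blast
    moreover have "v = x2 \<Longrightarrow> w = x1" using out_x2 that(1) by blast
    ultimately show ?thesis using distinct that(2) unfolding r_def by auto
  qed
  then have ranked: "\<forall>(v, w)\<in>D. v \<in> {x1, x2, x3} \<longrightarrow> w \<in> {x1, x2, x3} \<and> r w < r v"
    by blast
  have "H \<subseteq> D" "balanced H" using H(1) by (auto simp: eulerian_subgraphs_balanced)
  moreover have "finite H" using \<open>H \<subseteq> D\<close> \<open>finite D\<close> by (rule finite_subset)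
  ultimately show ?thesis using balanced_no_tail_in_ranked_set[OF _ _ _ ranked] H(2) by blast
qed

lemma orientation_glue:
  assumes "orientation V1 ((E1 \<union> E2 - F) \<inter> E1) D1" "orientation V2 E2 D2" "F \<subseteq> E1"
  shows "orientation (V1 \<union> V2) (E1 \<union> E2 - F) (D1 \<union> {(u, w) \<in> D2. {u, w} \<in> E2 - E1})"
proof -
  have "orientation (V1 \<union> V2) ((E1 \<union> E2 - F) \<inter> E1 \<union> (E2 - E1))
      (D1 \<union> {(u, w) \<in> D2. {u, w} \<in> E2 - E1})"
    by (intro orientation_Un assms(1) orientation_restrict[OF assms(2)]) auto
  moreover have "(E1 \<union> E2 - F) \<inter> E1 \<union> (E2 - E1) = E1 \<union> E2 - F" using assms(3) by blast
  ultimately show ?thesis by simp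
qed

lemma AT_orientation_Un:
  assumes "finite D1" "finite D2" "D1 \<subseteq> V \<times> V" "fst ` D2 \<inter> V = {}"
    and "AT_orientation D1" "AT_orientation D2"
  shows "AT_orientation (D1 \<union> D2)"
  using assms by (simp add: AT_orientation_iff_sign_sum eulerian_sign_sum_Un)

lemma max_outdeg_le_Un:
  assumes "max_outdeg_le V1 D1 k" "max_outdeg_le V2 D2 k"
    and "D1 \<subseteq> V1 \<times> V1" "fst ` D2' \<inter> V1 = {}" "D2' \<subseteq> D2" "finite D2"
  shows "max_outdeg_le (V1 \<union> V2) (D1 \<union> D2') k"
  unfolding max_outdeg_le_def
proof
  fix v assume v: "v \<in> V1 \<union> V2"
  show "int (outdeg (D1 \<union> D2') v) \<le> k"
  proof (cases "v \<in> V1")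
    case True
    then have "outdeg (D1 \<union> D2') v = outdeg D1 v"
      using assms(4) by (intro outdeg_Un_no_tail) blast
    then show ?thesis using assms(1) True by (simp add: max_outdeg_le_def)
  next
    case False
    then have "outdeg (D1 \<union> D2') v = outdeg D2' v"
      using assms(3) outdeg_Un_no_tail[of v D1 D2'] by (force simp: Un_commute)
    also have "\<dots> \<le> outdeg D2 v" using assms(6,5) by (rule outdeg_mono)
    finally show ?thesis using assms(2) False v by (force simp: max_outdeg_le_def)
  qed
qed

lemma clique_sum_arc_from_V1_in_E1:
  assumes "simple_graph V2 E2" "orientation V2 E2 D2" "V1 \<inter> V2 = {x1, x2, x3}"
    and "{x1, x2} \<in> E1" "{x1, x3} \<in> E1" "{x2, x3} \<in> E1"
    and "\<forall>x\<in>{x1, x2, x3}. \<forall>w. (x, w) \<in> D2 \<longrightarrow> w \<in> {x1, x2, x3}"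
    and "(u, w) \<in> D2" "u \<in> V1"
  shows "{u, w} \<in> E1"
proof -
  have "u \<in> {x1, x2, x3}" using assms(3,8,9) orientation_arcs_subset[OF assms(2)] by blast
  moreover have "w \<in> {x1, x2, x3}" using assms(7,8) calculation by blast
  moreover have "u \<noteq> w"
    using simple_graph_edge[OF assms(1) orientation_arc_edge[OF assms(2,8)]] by blast
  ultimately show ?thesis using assms(4-6) by (auto simp: insert_commute)
qed

lemma clique_sum_eulerian_subgraphs_restrict:
  assumes G1: "simple_graph V1 E1" and G2: "simple_graph V2 E2" and D2: "orientation V2 E2 D2"
    and T: "V1 \<inter> V2 = {x1, x2, x3}" "x1 \<noteq> x2" "x1 \<noteq> x3" "x2 \<noteq> x3" "{x1, x2} \<in> E2"
    and out: "outdeg D2 x1 = 0" "outdeg D2 x2 \<le> 1"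
      "\<forall>x\<in>{x1, x2, x3}. \<forall>w. (x, w) \<in> D2 \<longrightarrow> w \<in> {x1, x2, x3}"
  shows "eulerian_subgraphs {(u, w) \<in> D2. {u, w} \<in> E2 - E1} = eulerian_subgraphs D2"
proof -
  have "H \<subseteq> {(u, w) \<in> D2. {u, w} \<in> E2 - E1}" if H: "H \<in> eulerian_subgraphs D2" for H
  proof
    fix a assume "a \<in> H"
    then obtain u w where a: "a = (u, w)" "(u, w) \<in> H" "(u, w) \<in> D2"
      using H by (cases a) (auto simp: eulerian_subgraphs_def)
    have "u \<notin> {x1, x2, x3}"
      using eulerian_subgraph_no_tail_in_triangle[OF G2 D2 T(2-5) out H a(2)] .
    then have "u \<notin> V1" using a(3) orientation_arcs_subset[OF D2] T(1) by blast
    then show "a \<in> {(u, w) \<in> D2. {u, w} \<in> E2 - E1}"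
      using a simple_graph_edge[OF G1] orientation_arc_edge[OF D2] by blast
  qed
  then show ?thesis unfolding eulerian_subgraphs_def by (intro equalityI subsetI) auto
qed

theorem lemma2p4:
  fixes V1 V2 :: "'a set" and E1 E2 F :: "'a set set" and x1 x2 x3 :: 'a and k :: int
    and D1' D2 :: "('a \<times> 'a) set"
  assumes G1: "simple_graph V1 E1" and G2: "simple_graph V2 E2"
    and T_inter: "V1 \<inter> V2 = {x1, x2, x3}"
    and T_distinct: "x1 \<noteq> x2" "x1 \<noteq> x3" "x2 \<noteq> x3"
    and T_clique1: "{x1, x2} \<in> E1" "{x1, x3} \<in> E1" "{x2, x3} \<in> E1"
    and T_clique2: "{x1, x2} \<in> E2" "{x1, x3} \<in> E2" "{x2, x3} \<in> E2"
    and F_sub: "F \<subseteq> {{x1, x2}, {x1, x3}, {x2, x3}}"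
    and D1'_or: "orientation V1 ((E1 \<union> E2 - F) \<inter> E1) D1'"
    and D1'_AT: "AT_orientation D1'"
    and D1'_deg: "max_outdeg_le V1 D1' k"
    and D2_or: "orientation V2 E2 D2"
    and D2_AT: "AT_orientation D2"
    and D2_deg: "max_outdeg_le V2 D2 k"
    and D2_x1: "outdeg D2 x1 = 0"
    and D2_x2: "outdeg D2 x2 \<le> 1"
    and D2_x3: "outdeg D2 x3 \<le> 2"
    and D2_T: "\<forall>x\<in>{x1, x2, x3}. \<forall>w. (x, w) \<in> D2 \<longrightarrow> w \<in> {x1, x2, x3}"
  shows "\<exists>D. orientation (V1 \<union> V2) (E1 \<union> E2 - F) D \<and> AT_orientation D
             \<and> max_outdeg_le (V1 \<union> V2) D k
             \<and> (\<forall>v\<in>V1. outdeg D v = outdeg D1' v)"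
proof -
  define D2' where "D2' = {(u, w) \<in> D2. {u, w} \<in> E2 - E1}"
  have fin: "finite D1'" "finite D2"
    using G1 G2 D1'_or D2_or by (simp_all add: simple_graph_def finite_orientation)
  have "D2' \<subseteq> D2" unfolding D2'_def by blast
  then have "finite D2'" using fin(2) by (rule finite_subset)
  have "F \<subseteq> E1" using F_sub T_clique1 by blast
  then have orient: "orientation (V1 \<union> V2) (E1 \<union> E2 - F) (D1' \<union> D2')"
    unfolding D2'_def using D1'_or D2_or by (rule orientation_glue[rotated 2])
  have tails: "fst ` D2' \<inter> V1 = {}"
    using clique_sum_arc_from_V1_in_E1[OF G2 D2_or T_inter T_clique1 D2_T]
    unfolding D2'_def by force
  have "eulerian_subgraphs D2' = eulerian_subgraphs D2"
    unfolding D2'_def using G1 G2 D2_or T_inter T_distinct T_clique2(1) D2_x1 D2_x2 D2_T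
    by (rule clique_sum_eulerian_subgraphs_restrict)
  then have "AT_orientation D2'" using D2_AT by (simp add: AT_orientation_def EE_def OE_def)
  then have AT: "AT_orientation (D1' \<union> D2')"
    by (rule AT_orientation_Un[OF fin(1) \<open>finite D2'\<close> orientation_arcs_subset[OF D1'_or] tails D1'_AT])
  have deg: "max_outdeg_le (V1 \<union> V2) (D1' \<union> D2') k"
    using D1'_deg D2_deg orientation_arcs_subset[OF D1'_or] tails \<open>D2' \<subseteq> D2\<close> fin(2)
    by (rule max_outdeg_le_Un)
  have out: "\<forall>v\<in>V1. outdeg (D1' \<union> D2') v = outdeg D1' v"
    using tails by (intro ballI outdeg_Un_no_tail) blast
  show ?thesis using orient AT deg out by blast
qed

end
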